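(* Let $H$ be a complex separable Hilbert space and $S,T,X\in B(H)$. If the pair $(S,T)$ satisfies the Fuglede–Putnam property $(FP)_{B(H)}$ and $C\in B(H)$ belongs to $\ker(\delta_{S,T})$, then $$\|\delta_{S,T}X+C\|\ge\|C\|.$$
   Context: For $S,T\in B(H)$, the generalized derivation $\delta_{S,T}:B(H)\to B(H)$ is $\delta_{S,T}X=SX-XT$; thus $C\in\ker(\delta_{S,T})$ means $SC=CT$. The pair $(S,T)$ satisfies $(FP)_{B(H)}$ if for every $C\in B(H)$, $SC=CT$ implies $S^*C=CT^*$. $\|\cdot\|$ is the operator norm. *)

theory Defs
  imports "HOL-Analysis.Analysis"
begin

class complex_vector = real_vector +
  fixes scaleC :: "complex \<Rightarrow> 'a \<Rightarrow> 'a"  (infixr \<open>*\<^sub>C\<close> 75)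
  assumes scaleC_add_right: "a *\<^sub>C (x + y) = a *\<^sub>C x + a *\<^sub>C y"
    and scaleC_add_left: "(a + b) *\<^sub>C x = a *\<^sub>C x + b *\<^sub>C x"
    and scaleC_scaleC: "a *\<^sub>C (b *\<^sub>C x) = (a * b) *\<^sub>C x"
    and scaleC_one: "1 *\<^sub>C x = x"
    and scaleR_scaleC: "r *\<^sub>R x = complex_of_real r *\<^sub>C x"

class complex_hilbert = complex_vector + banach +
  fixes cinner :: "'a \<Rightarrow> 'a \<Rightarrow> complex"
  assumes cinner_commute: "cinner x y = cnj (cinner y x)"
    and cinner_add_left: "cinner (x + y) z = cinner x z + cinner y z"
    and cinner_scaleC_left: "cinner (c *\<^sub>C x) y = c * cinner x y"
    and cinner_ge_zero: "0 \<le> Re (cinner x x)"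
    and cinner_eq_zero_iff: "cinner x x = 0 \<longleftrightarrow> x = 0"
    and norm_eq_sqrt_cinner: "norm x = sqrt (Re (cinner x x))"

text \<open>Non-vacuity: the complex numbers form a complex Hilbert space.\<close>
instantiation complex :: complex_hilbert
begin
definition scaleC_complex :: "complex \<Rightarrow> complex \<Rightarrow> complex" where
  "scaleC_complex a x = a * x"
definition cinner_complex :: "complex \<Rightarrow> complex \<Rightarrow> complex" where
  "cinner_complex x y = x * cnj y"
instance
  by standard (auto simp: scaleC_complex_def cinner_complex_def algebra_simps
      scaleR_conv_of_real complex_mult_cnj cmod_def complex_eq_iff)
end

definition separable_H :: "'a::topological_space itself \<Rightarrow> bool" where
  "separable_H _ \<longleftrightarrow> (\<exists>D::'a set. countable D \<and> closure D = UNIV)"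

definition bounded_clinear :: "('a::complex_hilbert \<Rightarrow> 'b::complex_hilbert) \<Rightarrow> bool" where
  "bounded_clinear f \<longleftrightarrow>
     (\<forall>x y. f (x + y) = f x + f y) \<and> (\<forall>c x. f (c *\<^sub>C x) = c *\<^sub>C f x) \<and>
     (\<exists>K. \<forall>x. norm (f x) \<le> norm x * K)"

definition adj :: "('a::complex_hilbert \<Rightarrow> 'a) \<Rightarrow> ('a \<Rightarrow> 'a)" where
  "adj S = (THE A. \<forall>x y. cinner (S x) y = cinner x (A y))"

definition gen_deriv :: "('a::complex_hilbert \<Rightarrow> 'a) \<Rightarrow> ('a \<Rightarrow> 'a) \<Rightarrow> ('a \<Rightarrow> 'a) \<Rightarrow> ('a \<Rightarrow> 'a)" where
  "gen_deriv S T X = (\<lambda>x. S (X x) - X (T x))"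

definition FP_BH :: "('a::complex_hilbert \<Rightarrow> 'a) \<Rightarrow> ('a \<Rightarrow> 'a) \<Rightarrow> bool" where
  "FP_BH S T \<longleftrightarrow> (\<forall>C. bounded_clinear C \<longrightarrow> S \<circ> C = C \<circ> T \<longrightarrow> adj S \<circ> C = C \<circ> adj T)"

end

theory Submission
  imports Defs
begin

text \<open>
  By (FP), \<open>S C = C T\<close> gives \<open>S\<^sup>* C = C T\<^sup>*\<close>, and applied to \<open>C T\<close> it gives
  \<open>C T T\<^sup>* = C T\<^sup>* T\<close>. Hence \<open>S\<close> is normal on the range of \<open>C\<close>, \<open>T\<close> is normal on
  the range of \<open>C\<^sup>*\<close>, and the real and imaginary parts \<open>A\<^sub>S, B\<^sub>S\<close> and \<open>A\<^sub>T, B\<^sub>T\<close>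
  are self-adjoint operators commuting on these ranges and intertwined by \<open>C\<close>.
  Following Anderson, take the Cayley transforms \<open>U(A) = (A + \<i> s) (A - \<i> s)\<inverse>\<close>
  (\<open>s\<close> large) and the unitaries \<open>P\<^sub>k\<^sub>l = U(A\<^sub>T)\<^sup>k U(B\<^sub>T)\<^sup>l\<close>, \<open>Q\<^sub>k\<^sub>l = U(A\<^sub>S)\<^sup>k U(B\<^sub>S)\<^sup>l\<close>.
  For \<open>m\<close> in the range of \<open>C\<^sup>*\<close> and \<open>n\<close> in the range of \<open>C\<close>, the number
  \<open>\<langle>(S X - X T + C) P\<^sub>k\<^sub>l m, Q\<^sub>k\<^sub>l n\<rangle>\<close> equals \<open>\<langle>C m, n\<rangle>\<close> plus differences in \<open>k\<close>
  and in \<open>l\<close> of bounded quantities. Averaging over \<open>k, l < N\<close> and letting \<open>N \<rightarrow> \<infinity>\<close>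
  gives \<open>|\<langle>C m, n\<rangle>| \<le> \<parallel>S X - X T + C\<parallel> \<parallel>m\<parallel> \<parallel>n\<parallel>\<close>, and this already bounds \<open>\<parallel>C\<parallel>\<close>.
\<close>

section \<open>Inner product calculus\<close>

declare scaleC_one [simp]

lemma scaleC_zero_left [simp]: "0 *\<^sub>C x = 0"
  using scaleR_scaleC[of 0 x, symmetric] by simp

lemma scaleC_zero_right [simp]: "a *\<^sub>C 0 = 0"
  using scaleC_add_right[of a 0 0] by simp

lemma scaleC_minus1_left: "(-1) *\<^sub>C x = - x"
  using scaleR_scaleC[of "-1" x, symmetric] by simp

lemma scaleC_minus_right: "a *\<^sub>C (- x) = - (a *\<^sub>C x)"
  by (metis mult.commute scaleC_minus1_left scaleC_scaleC)

lemma scaleC_diff_right: "a *\<^sub>C (x - y) = a *\<^sub>C x - a *\<^sub>C y"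
  unfolding diff_conv_add_uminus by (simp only: scaleC_add_right scaleC_minus_right)

lemma cinner_add_right: "cinner x (y + z) = cinner x y + cinner x z"
  by (metis cinner_add_left cinner_commute complex_cnj_add)

lemma cinner_scaleC_right: "cinner x (c *\<^sub>C y) = cnj c * cinner x y"
  by (metis cinner_commute cinner_scaleC_left complex_cnj_cnj complex_cnj_mult)

lemma cinner_zero_left [simp]: "cinner 0 y = 0"
  using cinner_scaleC_left[of 0 0 y] by simp

lemma cinner_zero_right [simp]: "cinner x 0 = 0"
  using cinner_scaleC_right[of x 0 0] by simp

lemma cinner_minus_left: "cinner (- x) y = - cinner x y"
  using cinner_scaleC_left[of "-1" x y] by (simp add: scaleC_minus1_left)

lemma cinner_minus_right: "cinner x (- y) = - cinner x y"
  using cinner_scaleC_right[of x "-1" y] by (simp add: scaleC_minus1_left)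

lemma cinner_diff_left: "cinner (x - y) z = cinner x z - cinner y z"
  unfolding diff_conv_add_uminus by (simp only: cinner_add_left cinner_minus_left)

lemma cinner_diff_right: "cinner x (y - z) = cinner x y - cinner x z"
  unfolding diff_conv_add_uminus by (simp only: cinner_add_right cinner_minus_right)

lemma cinner_scaleR_left: "cinner (r *\<^sub>R x) y = complex_of_real r * cinner x y"
  by (simp add: scaleR_scaleC cinner_scaleC_left)

lemma cinner_scaleR_right: "cinner x (r *\<^sub>R y) = complex_of_real r * cinner x y"
  by (simp add: scaleR_scaleC cinner_scaleC_right)

lemma cinner_self_eq_norm_power2: "cinner x x = complex_of_real ((norm x)\<^sup>2)"
proof -
  have "Im (cinner x x) = 0"
    using arg_cong[OF cinner_commute[of x x], of Im] by simp
  moreover have "(norm x)\<^sup>2 = Re (cinner x x)"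
    using norm_eq_sqrt_cinner[of x] cinner_ge_zero[of x] by simp
  ultimately show ?thesis by (simp add: complex_eq_iff)
qed

lemma power2_norm_eq_Re_cinner: "(norm x)\<^sup>2 = Re (cinner x x)"
  by (simp add: cinner_self_eq_norm_power2)

lemma Re_cinner_commute: "Re (cinner y x) = Re (cinner x y)"
  by (subst cinner_commute) simp

lemma power2_norm_diff_scaleR:
  "(norm (x - t *\<^sub>R y))\<^sup>2 = (norm x)\<^sup>2 - 2 * t * Re (cinner x y) + t\<^sup>2 * (norm y)\<^sup>2"
proof -
  have "cinner (x - t *\<^sub>R y) (x - t *\<^sub>R y) = cinner x x - of_real t * cinner x y
      - of_real t * cinner y x + of_real t * of_real t * cinner y y"
    by (simp add: cinner_diff_left cinner_diff_right cinner_scaleR_left cinner_scaleR_right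
        algebra_simps)
  then show ?thesis
    unfolding power2_norm_eq_Re_cinner[of "x - t *\<^sub>R y"]
    by (simp add: cinner_self_eq_norm_power2 Re_cinner_commute[of y x] power2_eq_square)
qed

lemma Re_cinner_le_norm_mult: "Re (cinner x y) \<le> norm x * norm y"
proof (cases "x = 0 \<or> y = 0")
  case False
  define t where "t = norm x / norm y"
  have "t > 0" and "t * norm y = norm x" using False by (simp_all add: t_def)
  have "0 \<le> (norm (x - t *\<^sub>R y))\<^sup>2" by simp
  also have "\<dots> = 2 * t * (norm x * norm y - Re (cinner x y))"
    unfolding power2_norm_diff_scaleR using \<open>t * norm y = norm x\<close>[symmetric]
    by (simp add: power2_eq_square algebra_simps)
  finally show ?thesis using \<open>t > 0\<close> by (simp add: zero_le_mult_iff)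
qed auto

lemma norm_scaleC: "norm (a *\<^sub>C (x :: 'a::complex_hilbert)) = cmod a * norm x"
proof -
  have "cinner (a *\<^sub>C x) (a *\<^sub>C x) = (a * cnj a) * cinner x x"
    by (simp add: cinner_scaleC_left cinner_scaleC_right)
  also have "\<dots> = complex_of_real ((cmod a * norm x)\<^sup>2)"
    by (simp only: complex_norm_square[symmetric] cinner_self_eq_norm_power2 of_real_mult
        power_mult_distrib)
  finally have "(norm (a *\<^sub>C x))\<^sup>2 = (cmod a * norm x)\<^sup>2"
    by (simp add: power2_norm_eq_Re_cinner)
  then show ?thesis by (rule power2_eq_imp_eq) auto
qed

text \<open>Cauchy--Schwarz: rotate \<open>x\<close> so that the inner product becomes real.\<close>
lemma norm_cinner_le: "cmod (cinner x y) \<le> norm x * norm y"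
proof (cases "cinner x y = 0")
  case False
  define u where "u = cnj (cinner x y) / complex_of_real (cmod (cinner x y))"
  have "cmod u = 1" using False by (simp add: u_def norm_divide)
  have "cinner (u *\<^sub>C x) y = complex_of_real (cmod (cinner x y))"
    using False complex_norm_square[of "cinner x y"]
    by (simp add: u_def cinner_scaleC_left power2_eq_square field_simps)
  then show ?thesis
    using Re_cinner_le_norm_mult[of "u *\<^sub>C x" y] \<open>cmod u = 1\<close> by (simp add: norm_scaleC)
qed simp

lemma cinner_ext_right:
  assumes "\<And>y. cinner a y = cinner b y"
  shows "a = b"
proof -
  have "cinner (a - b) (a - b) = 0" by (simp add: cinner_diff_left assms)
  then show ?thesis by (simp add: cinner_eq_zero_iff)
qed

lemma cinner_ext_left:
  assumes "\<And>y. cinner y a = cinner y b"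
  shows "a = b"
  by (rule cinner_ext_right) (metis assms cinner_commute)

lemma parallelogram_law:
  "(norm (a + b))\<^sup>2 + (norm (a - b))\<^sup>2 = 2 * (norm a)\<^sup>2 + 2 * (norm (b :: 'a::complex_hilbert))\<^sup>2"
proof -
  have "cinner (a + b) (a + b) + cinner (a - b) (a - b) = 2 * cinner a a + 2 * cinner b b"
    by (simp add: cinner_add_left cinner_add_right cinner_diff_left cinner_diff_right algebra_simps)
  from arg_cong[where f = Re, OF this] show ?thesis
    by (simp add: power2_norm_eq_Re_cinner)
qed

section \<open>Riesz representation\<close>

lemma minimizing_sequence_Cauchy:
  fixes x :: "'a::complex_hilbert"
  assumes midpoint: "\<And>a b. a \<in> N \<Longrightarrow> b \<in> N \<Longrightarrow> (1/2) *\<^sub>R (a + b) \<in> N"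
    and lower: "\<And>n. n \<in> N \<Longrightarrow> d \<le> norm (x - n)" and "0 \<le> d"
    and ns: "\<And>k. ns k \<in> N" "\<And>k. (norm (x - ns k))\<^sup>2 < d\<^sup>2 + 1 / real (Suc k)"
  shows "Cauchy ns"
proof (rule CauchyI)
  have estimate: "(norm (ns j - ns k))\<^sup>2 \<le> 2 / real (Suc j) + 2 / real (Suc k)" for j k
  proof -
    define m where "m = (1/2) *\<^sub>R (ns j + ns k)"
    have "(2 * d)\<^sup>2 \<le> (2 * norm (x - m))\<^sup>2"
      using lower[OF midpoint[OF ns(1) ns(1)]] \<open>0 \<le> d\<close> by (simp add: m_def power_mono)
    also have "(x - ns j) + (x - ns k) = 2 *\<^sub>R (x - m)"
      by (simp add: m_def algebra_simps scaleR_2)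
    then have "2 * norm (x - m) = norm ((x - ns j) + (x - ns k))" by simp
    finally show ?thesis
      using parallelogram_law[of "x - ns j" "x - ns k"] ns(2)[of j] ns(2)[of k]
      by (simp add: norm_minus_commute power_mult_distrib)
  qed
  fix e :: real
  assume "e > 0"
  obtain M :: nat where "4 / e\<^sup>2 < real M" using reals_Archimedean2 by blast
  then have M: "4 / e\<^sup>2 < real (Suc M)" by simp
  show "\<exists>M. \<forall>m\<ge>M. \<forall>n\<ge>M. norm (ns m - ns n) < e"
  proof (intro exI allI impI)
    fix m n assume "M \<le> m" "M \<le> n"
    then have "2 / real (Suc m) + 2 / real (Suc n) \<le> 4 / real (Suc M)"
      using divide_left_mono[of "real (Suc M)" "real (Suc m)" 2]
        divide_left_mono[of "real (Suc M)" "real (Suc n)" 2] by simp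
    also have "\<dots> < e\<^sup>2"
      using M \<open>e > 0\<close> by (simp add: divide_less_eq mult.commute)
    finally have "(norm (ns m - ns n))\<^sup>2 < e\<^sup>2" using estimate[of m n] by linarith
    then show "norm (ns m - ns n) < e" using \<open>e > 0\<close> by (simp add: power_less_imp_less_base)
  qed
qed

lemma nearest_point_exists:
  fixes x :: "'a::complex_hilbert"
  assumes "closed N" "N \<noteq> {}"
    and midpoint: "\<And>a b. a \<in> N \<Longrightarrow> b \<in> N \<Longrightarrow> (1/2) *\<^sub>R (a + b) \<in> N"
  obtains n0 where "n0 \<in> N" "\<And>n. n \<in> N \<Longrightarrow> norm (x - n0) \<le> norm (x - n)"
proof -
  define d where "d = Inf ((\<lambda>n. norm (x - n)) ` N)"
  have bdd: "bdd_below ((\<lambda>n. norm (x - n)) ` N)" by (rule bdd_belowI[of _ 0]) auto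
  have lower: "d \<le> norm (x - n)" if "n \<in> N" for n
    unfolding d_def using that bdd by (auto intro: cInf_lower)
  have "0 \<le> d" unfolding d_def using \<open>N \<noteq> {}\<close> by (auto intro: cInf_greatest)
  have "\<exists>n\<in>N. (norm (x - n))\<^sup>2 < d\<^sup>2 + 1 / real (Suc k)" for k
  proof -
    have "d < sqrt (d\<^sup>2 + 1 / real (Suc k))"
      using \<open>0 \<le> d\<close> by (simp add: real_less_rsqrt)
    then have "Inf ((\<lambda>n. norm (x - n)) ` N) < sqrt (d\<^sup>2 + 1 / real (Suc k))"
      by (simp add: d_def)
    then obtain n where "n \<in> N" and n: "norm (x - n) < sqrt (d\<^sup>2 + 1 / real (Suc k))"
      using cInf_lessD[of "(\<lambda>n. norm (x - n)) ` N"] \<open>N \<noteq> {}\<close> by blast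
    moreover have "(norm (x - n))\<^sup>2 < d\<^sup>2 + 1 / real (Suc k)"
      using power_strict_mono[OF n norm_ge_zero, of 2] by simp
    ultimately show ?thesis by blast
  qed
  then obtain ns where ns: "\<And>k. ns k \<in> N" "\<And>k. (norm (x - ns k))\<^sup>2 < d\<^sup>2 + 1 / real (Suc k)"
    by metis
  obtain n0 where lim: "ns \<longlonglongrightarrow> n0"
    using minimizing_sequence_Cauchy[OF midpoint lower \<open>0 \<le> d\<close> ns] Cauchy_convergent_iff
      convergent_def by blast
  have "n0 \<in> N" using \<open>closed N\<close> ns(1) lim closed_sequentially by blast
  moreover have "(norm (x - n0))\<^sup>2 \<le> d\<^sup>2 + 0"
  proof (rule LIMSEQ_le)
    show "(\<lambda>k. (norm (x - ns k))\<^sup>2) \<longlonglongrightarrow> (norm (x - n0))\<^sup>2"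
      by (intro tendsto_intros lim)
    show "(\<lambda>k. d\<^sup>2 + 1 / real (Suc k)) \<longlonglongrightarrow> d\<^sup>2 + 0"
      by (intro tendsto_intros LIMSEQ_inverse_real_of_nat[unfolded inverse_eq_divide])
  qed (use ns(2) less_imp_le in blast)
  then have "norm (x - n0) \<le> d" using \<open>0 \<le> d\<close> by (simp add: power2_le_iff_abs_le)
  ultimately show ?thesis using that lower by force
qed

lemma Re_cinner_eq_0_if_minimal:
  assumes "\<And>r. norm e \<le> norm (e - r *\<^sub>R n)"
  shows "Re (cinner e n) = 0"
proof (cases "n = 0")
  case False
  define R where "R = Re (cinner e n)"
  define r where "r = R / (norm n)\<^sup>2"
  have "(norm e)\<^sup>2 \<le> (norm (e - r *\<^sub>R n))\<^sup>2"
    using assms[of r] by (simp add: power_mono)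
  then have "2 * r * R \<le> r\<^sup>2 * (norm n)\<^sup>2"
    by (simp add: power2_norm_diff_scaleR R_def)
  then have "R * R \<le> 0"
    using False by (simp add: r_def power2_eq_square field_simps)
  then show ?thesis by (metis R_def antisym mult_eq_0_iff zero_le_square)
qed simp

lemma exists_orthogonal_to_kernel:
  fixes g :: "'a::complex_hilbert \<Rightarrow> complex"
  assumes add: "\<And>x y. g (x + y) = g x + g y" and scale: "\<And>c x. g (c *\<^sub>C x) = c * g x"
    and bound: "\<And>x. cmod (g x) \<le> norm x * K" and "g x0 \<noteq> 0"
  obtains e where "g e \<noteq> 0" "\<And>n. g n = 0 \<Longrightarrow> cinner n e = 0"
proof -
  have g_scaleR: "g (r *\<^sub>R x) = r *\<^sub>R g x" for r x
    by (simp only: scaleR_scaleC[of r x] scale scaleR_conv_of_real)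
  have g_diff: "g (x - y) = g x - g y" for x y
    using add[of "x - y" y] by simp
  have "bounded_linear g"
    by (rule bounded_linear_intro[of g K]) (simp_all add: add g_scaleR bound)
  define N where "N = {n. g n = 0}"
  have "closed N"
    unfolding N_def using \<open>bounded_linear g\<close>
    by (intro closed_Collect_eq linear_continuous_on continuous_on_const)
  moreover have "0 \<in> N" using g_diff[of 0 0] by (simp add: N_def)
  moreover have "(1/2) *\<^sub>R (a + b) \<in> N" if "a \<in> N" "b \<in> N" for a b
    using that by (simp add: N_def g_scaleR add)
  ultimately obtain n0 where n0: "n0 \<in> N" "\<And>n. n \<in> N \<Longrightarrow> norm (x0 - n0) \<le> norm (x0 - n)"
    using nearest_point_exists[of N x0] by blast
  define e where "e = x0 - n0"
  have "g e \<noteq> 0" using n0(1) \<open>g x0 \<noteq> 0\<close> by (simp add: e_def g_diff N_def)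
  moreover have "cinner n e = 0" if "n \<in> N" for n
  proof -
    have minimal: "norm e \<le> norm (e - r *\<^sub>R v)" if "v \<in> N" for v r
      using n0 that by (simp add: N_def add g_scaleR e_def algebra_simps)
    have "Re (cinner e n) = 0" "Re (cinner e (\<i> *\<^sub>C n)) = 0"
      using that by (auto intro!: Re_cinner_eq_0_if_minimal minimal simp: N_def scale)
    then show ?thesis by (subst cinner_commute) (simp add: cinner_scaleC_right complex_eq_iff)
  qed
  ultimately show ?thesis using that by (simp add: N_def)
qed

theorem riesz_representation:
  fixes g :: "'a::complex_hilbert \<Rightarrow> complex"
  assumes add: "\<And>x y. g (x + y) = g x + g y" and scale: "\<And>c x. g (c *\<^sub>C x) = c * g x"
    and bound: "\<And>x. cmod (g x) \<le> norm x * K"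
  obtains z where "\<And>x. g x = cinner x z"
proof (cases "\<forall>x. g x = 0")
  case True
  then show ?thesis using that[of 0] by simp
next
  case False
  then obtain e where e: "g e \<noteq> 0" "\<And>n. g n = 0 \<Longrightarrow> cinner n e = 0"
    using exists_orthogonal_to_kernel[OF add scale bound] by blast
  have g_diff: "g (x - y) = g x - g y" for x y
    using add[of "x - y" y] by simp
  define \<nu> where "\<nu> = complex_of_real ((norm e)\<^sup>2)"
  have "\<nu> \<noteq> 0" "cnj \<nu> = \<nu>"
    using e(1) g_diff[of 0 0] by (auto simp: \<nu>_def)
  show ?thesis
  proof (rule that)
    fix x
    have "g (x - (g x / g e) *\<^sub>C e) = 0" using e(1) by (simp add: g_diff scale)
    then have "cinner x e = (g x / g e) * \<nu>"
      using e(2)[of "x - (g x / g e) *\<^sub>C e"]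
      by (simp add: cinner_diff_left cinner_scaleC_left \<nu>_def cinner_self_eq_norm_power2)
    then show "g x = cinner x ((cnj (g e) / \<nu>) *\<^sub>C e)"
      using e(1) \<open>\<nu> \<noteq> 0\<close> \<open>cnj \<nu> = \<nu>\<close> by (simp add: cinner_scaleC_right)
  qed
qed

section \<open>Complex-linear maps and adjoints\<close>

definition clinear :: "('a::complex_vector \<Rightarrow> 'b::complex_vector) \<Rightarrow> bool" where
  "clinear f \<longleftrightarrow> (\<forall>x y. f (x + y) = f x + f y) \<and> (\<forall>c x. f (c *\<^sub>C x) = c *\<^sub>C f x)"

lemma clinear_add: "clinear f \<Longrightarrow> f (x + y) = f x + f y"
  by (simp add: clinear_def)

lemma clinear_scaleC: "clinear f \<Longrightarrow> f (c *\<^sub>C x) = c *\<^sub>C f x"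
  by (simp add: clinear_def)

lemma clinear_minus: "clinear f \<Longrightarrow> f (- x) = - f x"
  using clinear_scaleC[of f "-1" x] by (simp add: scaleC_minus1_left)

lemma clinear_diff: "clinear f \<Longrightarrow> f (x - y) = f x - f y"
  unfolding diff_conv_add_uminus by (simp only: clinear_add clinear_minus)

lemma bounded_clinear_imp_clinear: "bounded_clinear f \<Longrightarrow> clinear f"
  by (simp add: clinear_def bounded_clinear_def)

lemma bounded_clinear_bound:
  assumes "bounded_clinear f"
  obtains K where "K \<ge> 0" "\<And>x. norm (f x) \<le> norm x * K"
proof -
  obtain K where "\<And>x. norm (f x) \<le> norm x * K"
    using assms unfolding bounded_clinear_def by blast
  then have "\<And>x. norm (f x) \<le> norm x * max K 0"
    by (metis max.cobounded1 mult_left_mono norm_ge_zero order_trans)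
  then show ?thesis using that[of "max K 0"] by simp
qed

lemma bounded_clinear_imp_bounded_linear:
  assumes "bounded_clinear f"
  shows "bounded_linear f"
proof -
  obtain K where "\<And>x. norm (f x) \<le> norm x * K"
    using bounded_clinear_bound[OF assms] by blast
  moreover note bounded_clinear_imp_clinear[OF assms]
  ultimately show ?thesis
    by (intro bounded_linear_intro[of f K]) (simp_all add: clinear_add clinear_scaleC scaleR_scaleC)
qed

lemma bounded_clinear_compose:
  assumes "bounded_clinear f" "bounded_clinear g"
  shows "bounded_clinear (f \<circ> g)"
proof -
  obtain K1 where K1: "K1 \<ge> 0" "\<And>x. norm (f x) \<le> norm x * K1"
    using bounded_clinear_bound[OF assms(1)] by blast
  obtain K2 where K2: "\<And>x. norm (g x) \<le> norm x * K2"
    using bounded_clinear_bound[OF assms(2)] by blast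
  have "norm (f (g x)) \<le> norm x * (K2 * K1)" for x
  proof -
    have "norm (f (g x)) \<le> norm (g x) * K1" by (rule K1(2))
    also have "\<dots> \<le> norm x * K2 * K1" using K1(1) K2 by (rule mult_right_mono[rotated])
    finally show ?thesis by (simp add: mult.assoc)
  qed
  then show ?thesis using assms unfolding bounded_clinear_def by auto
qed

lemma bounded_clinear_lincomb:
  assumes "bounded_clinear f" "bounded_clinear g"
  shows "bounded_clinear (\<lambda>x. a *\<^sub>C f x + b *\<^sub>C g x)"
proof -
  obtain K1 where K1: "K1 \<ge> 0" "\<And>x. norm (f x) \<le> norm x * K1"
    using bounded_clinear_bound[OF assms(1)] by blast
  obtain K2 where K2: "K2 \<ge> 0" "\<And>x. norm (g x) \<le> norm x * K2"
    using bounded_clinear_bound[OF assms(2)] by blast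
  have "norm (a *\<^sub>C f x + b *\<^sub>C g x) \<le> norm x * (cmod a * K1 + cmod b * K2)" for x
  proof -
    have "norm (a *\<^sub>C f x + b *\<^sub>C g x) \<le> cmod a * norm (f x) + cmod b * norm (g x)"
      using norm_triangle_ineq[of "a *\<^sub>C f x" "b *\<^sub>C g x"] by (simp add: norm_scaleC)
    also have "\<dots> \<le> cmod a * (norm x * K1) + cmod b * (norm x * K2)"
      using K1 K2 by (intro add_mono mult_left_mono) auto
    finally show ?thesis by (simp add: algebra_simps)
  qed
  moreover have "clinear (\<lambda>x. a *\<^sub>C f x + b *\<^sub>C g x)"
    using assms[THEN bounded_clinear_imp_clinear] unfolding clinear_def
    by (simp add: scaleC_add_right scaleC_scaleC ac_simps)
  ultimately show ?thesis unfolding bounded_clinear_def clinear_def by blast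
qed

lemma adj_eqI:
  assumes "\<And>x y. cinner (S x) y = cinner x (A y)"
  shows "adj S = A"
  unfolding adj_def
proof (rule the_equality)
  show "\<And>B. \<forall>x y. cinner (S x) y = cinner x (B y) \<Longrightarrow> B = A"
    by (rule ext, rule cinner_ext_left) (metis assms)
qed (use assms in blast)

lemma cinner_adj_right:
  assumes "bounded_clinear S"
  shows "cinner (S x) y = cinner x (adj S y)"
proof -
  obtain K where K: "K \<ge> 0" "\<And>x. norm (S x) \<le> norm x * K"
    using bounded_clinear_bound[OF assms] by blast
  have "\<exists>z. \<forall>x. cinner (S x) y = cinner x z" for y
  proof (rule riesz_representation[of "\<lambda>x. cinner (S x) y" "K * norm y"])
    fix x
    show "cmod (cinner (S x) y) \<le> norm x * (K * norm y)"
      using norm_cinner_le[of "S x" y] mult_right_mono[OF K(2)[of x], of "norm y"]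
      by (simp add: mult.assoc)
  qed (auto simp: assms[THEN bounded_clinear_imp_clinear] clinear_add clinear_scaleC
      cinner_add_left cinner_scaleC_left)
  then obtain A where "\<And>x y. cinner (S x) y = cinner x (A y)" by metis
  then show ?thesis by (simp add: adj_eqI)
qed

lemma cinner_adj_left:
  assumes "bounded_clinear S"
  shows "cinner (adj S x) y = cinner x (S y)"
  by (metis cinner_adj_right[OF assms] cinner_commute)

lemma bounded_clinear_adj:
  assumes "bounded_clinear S"
  shows "bounded_clinear (adj S)"
proof -
  have "adj S (x + y) = adj S x + adj S y" for x y
    by (rule cinner_ext_left) (simp add: cinner_adj_right[OF assms, symmetric] cinner_add_right)
  moreover have "adj S (c *\<^sub>C x) = c *\<^sub>C adj S x" for c x
    by (rule cinner_ext_left) (simp add: cinner_adj_right[OF assms, symmetric] cinner_scaleC_right)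
  moreover obtain K where K: "K \<ge> 0" "\<And>x. norm (S x) \<le> norm x * K"
    using bounded_clinear_bound[OF assms] by blast
  have "norm (adj S y) \<le> norm y * K" for y
  proof -
    have "(norm (adj S y))\<^sup>2 = Re (cinner (S (adj S y)) y)"
      by (simp add: power2_norm_eq_Re_cinner cinner_adj_right[OF assms])
    also have "\<dots> \<le> norm (S (adj S y)) * norm y"
      by (rule Re_cinner_le_norm_mult)
    also have "\<dots> \<le> norm (adj S y) * (norm y * K)"
      using mult_right_mono[OF K(2)[of "adj S y"], of "norm y"] by (simp add: algebra_simps)
    finally show ?thesis
      by (cases "adj S y = 0") (auto simp: power2_eq_square K(1))
  qed
  ultimately show ?thesis unfolding bounded_clinear_def by blast
qed

lemma adj_adj: "bounded_clinear S \<Longrightarrow> adj (adj S) = S"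
  by (simp add: adj_eqI cinner_adj_left)

lemma adj_compose:
  assumes "bounded_clinear F" "bounded_clinear G"
  shows "adj (F \<circ> G) = adj G \<circ> adj F"
  by (rule adj_eqI) (simp add: cinner_adj_right assms)

section \<open>Resolvents and Cayley transforms\<close>

definition selfadjoint :: "('a::complex_hilbert \<Rightarrow> 'a) \<Rightarrow> bool" where
  "selfadjoint A \<longleftrightarrow> (\<forall>x y. cinner (A x) y = cinner x (A y))"

definition shift_op :: "('a::complex_vector \<Rightarrow> 'a) \<Rightarrow> complex \<Rightarrow> 'a \<Rightarrow> 'a" where
  "shift_op X c = (\<lambda>z. X z - c *\<^sub>C z)"

definition resolvent :: "('a::complex_vector \<Rightarrow> 'a) \<Rightarrow> complex \<Rightarrow> 'a \<Rightarrow> 'a" where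
  "resolvent X c = inv (shift_op X c)"

text \<open>For \<open>c = \<i> s\<close> this is the Cayley transform \<open>(X + \<i> s) (X - \<i> s)\<inverse>\<close>.\<close>
definition cayley :: "('a::complex_vector \<Rightarrow> 'a) \<Rightarrow> complex \<Rightarrow> 'a \<Rightarrow> 'a" where
  "cayley X c = shift_op X (cnj c) \<circ> resolvent X c"

lemma clinear_shift_op: "clinear X \<Longrightarrow> clinear (shift_op X c)"
  unfolding clinear_def shift_op_def
  by (simp add: scaleC_add_right scaleC_diff_right scaleC_scaleC mult.commute algebra_simps)

lemma resolvent_shift_op: "bij (shift_op X c) \<Longrightarrow> resolvent X c (shift_op X c x) = x"
  unfolding resolvent_def by (simp add: bij_is_inj)

lemma shift_op_resolvent: "bij (shift_op X c) \<Longrightarrow> shift_op X c (resolvent X c y) = y"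
  unfolding resolvent_def by (simp add: bij_is_surj surj_f_inv_f)

lemma cayley_shift_op: "bij (shift_op X c) \<Longrightarrow> cayley X c (shift_op X c z) = shift_op X (cnj c) z"
  by (simp add: cayley_def resolvent_shift_op)

text \<open>Injectivity from \<open>\<parallel>X\<parallel> < \<bar>c\<bar>\<close>; surjectivity from the Banach fixed point theorem applied
  to \<open>x \<mapsto> (X x - y) / c\<close>.\<close>
lemma bij_shift_op:
  fixes X :: "'a::complex_hilbert \<Rightarrow> 'a"
  assumes "clinear X" and K: "\<And>x. norm (X x) \<le> norm x * K" "0 \<le> K" "K < cmod c"
  shows "bij (shift_op X c)"
proof -
  have "c \<noteq> 0" using K(2,3) by auto
  have "a = 0" if "shift_op X c a = 0" for a
  proof -
    have "cmod c * norm a \<le> norm a * K"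
      using that K(1)[of a] by (simp add: shift_op_def norm_scaleC)
    then show ?thesis using K(2,3)
      by (smt (verit) mult.commute mult_less_cancel_left norm_eq_zero norm_ge_zero)
  qed
  then have "inj (shift_op X c)"
    by (intro injI) (metis clinear_diff[OF clinear_shift_op[OF assms(1)]] eq_iff_diff_eq_0)
  moreover have "\<exists>x. shift_op X c x = y" for y
  proof -
    define F where "F = (\<lambda>x. (1 / c) *\<^sub>C (X x - y))"
    have "dist (F x) (F x') \<le> (K / cmod c) * dist x x'" for x x'
    proof -
      have "F x - F x' = (1 / c) *\<^sub>C X (x - x')"
        by (simp add: F_def clinear_diff[OF assms(1)] scaleC_diff_right[symmetric])
      then have "dist (F x) (F x') = norm (X (x - x')) / cmod c"
        by (simp add: dist_norm norm_scaleC norm_divide)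
      also have "\<dots> \<le> norm (x - x') * K / cmod c"
        using K(1) by (simp add: divide_right_mono)
      finally show ?thesis by (simp add: dist_norm mult.commute)
    qed
    moreover have "0 \<le> K / cmod c" "K / cmod c < 1"
      using K(2,3) by (auto simp: divide_less_eq)
    ultimately obtain x where "F x = x" using banach_fix_type[of "K / cmod c" F] by blast
    then have "c *\<^sub>C x = (c * (1 / c)) *\<^sub>C (X x - y)"
      by (metis F_def scaleC_scaleC)
    then have "c *\<^sub>C x = X x - y" using \<open>c \<noteq> 0\<close> by simp
    then have "shift_op X c x = y" by (simp add: shift_op_def algebra_simps)
    then show ?thesis ..
  qed
  ultimately show ?thesis by (metis bijI surjI)
qed

lemma cinner_shift_op_cnj:
  assumes "selfadjoint X"
  shows "cinner (shift_op X (cnj d) a) (shift_op X (cnj d) b) = cinner (shift_op X d a) (shift_op X d b)"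
  using assms unfolding shift_op_def selfadjoint_def
  by (simp add: cinner_diff_left cinner_diff_right cinner_scaleC_left cinner_scaleC_right
      algebra_simps)

lemma cinner_cayley:
  assumes "selfadjoint X" "bij (shift_op X c)"
  shows "cinner (cayley X c u) (cayley X c v) = cinner u v"
  by (simp add: cayley_def cinner_shift_op_cnj[OF assms(1)] shift_op_resolvent[OF assms(2)])

lemma shift_op_intertwining:
  assumes "clinear C" "\<And>z. X1 (C z) = C (X2 z)"
  shows "shift_op X1 c (C z) = C (shift_op X2 c z)"
  by (simp add: shift_op_def assms clinear_diff[OF assms(1)] clinear_scaleC[OF assms(1)])

lemma resolvent_intertwining:
  assumes "clinear C" "\<And>z. X1 (C z) = C (X2 z)" "bij (shift_op X1 c)" "bij (shift_op X2 c)"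
  shows "resolvent X1 c (C z) = C (resolvent X2 c z)"
  by (metis assms shift_op_intertwining resolvent_shift_op shift_op_resolvent)

lemma cayley_intertwining:
  assumes "clinear C" "\<And>z. X1 (C z) = C (X2 z)" "bij (shift_op X1 c)" "bij (shift_op X2 c)"
  shows "cayley X1 c (C z) = C (cayley X2 c z)"
  by (simp add: cayley_def resolvent_intertwining[OF assms]
      shift_op_intertwining[of C X1 X2, OF assms(1,2)])

text \<open>The discrete derivative that drives the telescoping argument.\<close>
lemma cinner_cayley_difference:
  assumes "clinear Y" "bij (shift_op X c)" "bij (shift_op X' c)"
  shows "cinner (Y (cayley X' c (shift_op X' c p))) (cayley X c (shift_op X c q))
       - cinner (Y (shift_op X' c p)) (shift_op X c q)
       = (c - cnj c) * (cinner (Y p) (X q) - cinner (Y (X' p)) q)"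
  unfolding cayley_shift_op[OF assms(2)] cayley_shift_op[OF assms(3)]
  unfolding shift_op_def clinear_diff[OF assms(1)] clinear_scaleC[OF assms(1)]
    cinner_diff_left cinner_diff_right cinner_scaleC_left cinner_scaleC_right
  by (simp add: algebra_simps)

section \<open>Commuting operators on an invariant subspace\<close>

definition csubspace :: "'a::complex_vector set \<Rightarrow> bool" where
  "csubspace L \<longleftrightarrow> (\<forall>a\<in>L. \<forall>b\<in>L. a - b \<in> L) \<and> (\<forall>a\<in>L. \<forall>c. c *\<^sub>C a \<in> L)"

definition commute_on :: "'a set \<Rightarrow> ('a \<Rightarrow> 'a) \<Rightarrow> ('a \<Rightarrow> 'a) \<Rightarrow> bool" where
  "commute_on L F G \<longleftrightarrow> (\<forall>z\<in>L. F (G z) = G (F z))"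

lemma csubspace_range: "clinear f \<Longrightarrow> csubspace (range f)"
  unfolding csubspace_def by (auto simp: clinear_diff[symmetric] clinear_scaleC[symmetric])

lemma commute_on_sym: "commute_on L F G \<Longrightarrow> commute_on L G F"
  by (simp add: commute_on_def)

lemma commute_on_refl: "commute_on L F F"
  by (simp add: commute_on_def)

lemma commute_on_compose:
  "commute_on L F G1 \<Longrightarrow> commute_on L F G2 \<Longrightarrow> G2 ` L \<subseteq> L \<Longrightarrow> commute_on L F (G1 \<circ> G2)"
  by (auto simp: commute_on_def)

lemma image_funpow_subset: "G ` L \<subseteq> L \<Longrightarrow> (G ^^ n) ` L \<subseteq> L"
  by (induction n) auto

lemma commute_on_funpow:
  assumes "commute_on L F G" "G ` L \<subseteq> L"
  shows "commute_on L F (G ^^ n)"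
proof (induction n)
  case (Suc n)
  have "commute_on L F (G \<circ> G ^^ n)"
    by (rule commute_on_compose[OF assms(1) Suc image_funpow_subset[OF assms(2)]])
  then show ?case by (simp only: funpow.simps(2))
qed (simp add: commute_on_def)

lemma image_shift_op_subset: "csubspace L \<Longrightarrow> X ` L \<subseteq> L \<Longrightarrow> shift_op X c ` L \<subseteq> L"
  by (auto simp: csubspace_def shift_op_def)

lemma image_cayley_subset:
  assumes "csubspace L" "X ` L \<subseteq> L" "resolvent X c ` L \<subseteq> L"
  shows "cayley X c ` L \<subseteq> L"
proof -
  have "cayley X c ` L = shift_op X (cnj c) ` resolvent X c ` L"
    by (simp add: cayley_def image_comp)
  also have "\<dots> \<subseteq> shift_op X (cnj c) ` L" using assms(3) by (rule image_mono)
  also have "\<dots> \<subseteq> L" using assms(1,2) by (rule image_shift_op_subset)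
  finally show ?thesis .
qed

lemma commute_on_shift_op:
  "clinear G \<Longrightarrow> commute_on L X G \<Longrightarrow> commute_on L (shift_op X c) G"
  by (simp add: commute_on_def shift_op_def clinear_diff clinear_scaleC)

lemma commute_on_resolvent:
  assumes "bij (shift_op X c)" "resolvent X c ` L \<subseteq> L" "G ` L \<subseteq> L"
    and "commute_on L (shift_op X c) G"
  shows "commute_on L (resolvent X c) G"
  unfolding commute_on_def
proof
  fix z assume "z \<in> L"
  then have "resolvent X c z \<in> L" using assms(2) by blast
  then have "G z = shift_op X c (G (resolvent X c z))"
    using assms(4) by (simp add: commute_on_def shift_op_resolvent[OF assms(1)])
  then show "resolvent X c (G z) = G (resolvent X c z)"
    by (simp add: resolvent_shift_op[OF assms(1)])
qed

lemma commute_on_shift_op_cayley: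
  assumes "csubspace L" "clinear X" "clinear Z" "bij (shift_op Z c)"
    and "X ` L \<subseteq> L" "Z ` L \<subseteq> L" "resolvent Z c ` L \<subseteq> L" "commute_on L X Z"
  shows "commute_on L (shift_op X d) (cayley Z c)"
proof -
  have "commute_on L (shift_op X d) Z" by (rule commute_on_shift_op[OF assms(3,8)])
  then have shifts: "commute_on L (shift_op Z e) (shift_op X d)" for e
    by (rule commute_on_shift_op[OF clinear_shift_op[OF assms(2)] commute_on_sym])
  have resolvent: "commute_on L (resolvent Z c) (shift_op X d)"
    by (rule commute_on_resolvent[OF assms(4,7) image_shift_op_subset[OF assms(1,5)] shifts])
  show ?thesis
    unfolding cayley_def
    by (rule commute_on_compose[OF commute_on_sym[OF shifts] commute_on_sym[OF resolvent] assms(7)])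
qed

lemma commute_on_cayley_cayley:
  assumes "csubspace L" "clinear X" "clinear Z" "bij (shift_op X c)" "bij (shift_op Z c)"
    and "X ` L \<subseteq> L" "Z ` L \<subseteq> L" "resolvent X c ` L \<subseteq> L" "resolvent Z c ` L \<subseteq> L"
    and "commute_on L X Z"
  shows "commute_on L (cayley X c) (cayley Z c)"
proof -
  have shift: "commute_on L (shift_op X d) (cayley Z c)" for d
    by (rule commute_on_shift_op_cayley[OF assms(1,2,3,5,6,7,9,10)])
  have resolvent: "commute_on L (resolvent X c) (cayley Z c)"
    by (rule commute_on_resolvent[OF assms(4,8) image_cayley_subset[OF assms(1,7,9)] shift])
  show ?thesis
    unfolding cayley_def[of X]
    by (rule commute_on_sym[OF commute_on_compose[OF commute_on_sym[OF shift]
          commute_on_sym[OF resolvent] assms(8)]])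
qed

definition cayley_grid ::
    "('a::complex_vector \<Rightarrow> 'a) \<Rightarrow> ('a \<Rightarrow> 'a) \<Rightarrow> complex \<Rightarrow> nat \<Rightarrow> nat \<Rightarrow> 'a \<Rightarrow> 'a"
  where "cayley_grid A B c k l = (cayley A c ^^ k) \<circ> (cayley B c ^^ l)"

lemma cayley_grid_Suc_left: "cayley_grid A B c (Suc k) l z = cayley A c (cayley_grid A B c k l z)"
  by (simp add: cayley_grid_def)

lemma cayley_grid_intertwining:
  assumes "clinear C" "\<And>z. A1 (C z) = C (A2 z)" "\<And>z. B1 (C z) = C (B2 z)"
    and "bij (shift_op A1 c)" "bij (shift_op A2 c)" "bij (shift_op B1 c)" "bij (shift_op B2 c)"
  shows "C (cayley_grid A2 B2 c k l z) = cayley_grid A1 B1 c k l (C z)"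
proof -
  have "(cayley B1 c ^^ l) (C z) = C ((cayley B2 c ^^ l) z)" for z
    by (induction l) (simp_all add: cayley_intertwining[of C B1 B2, OF assms(1,3,6,7)])
  moreover have "(cayley A1 c ^^ k) (C z) = C ((cayley A2 c ^^ k) z)" for z
    by (induction k) (simp_all add: cayley_intertwining[of C A1 A2, OF assms(1,2,4,5)])
  ultimately show ?thesis by (simp add: cayley_grid_def)
qed

text \<open>Invariance of \<open>L\<close> under the resolvents is what lets the commutation of \<open>A\<close> and \<open>B\<close>
  on \<open>L\<close> pass to their Cayley transforms.\<close>
locale commuting_selfadjoint_pair =
  fixes L :: "'a::complex_hilbert set" and A B :: "'a \<Rightarrow> 'a" and c :: complex
  assumes subspace: "csubspace L"
    and clinear_A: "clinear A" and clinear_B: "clinear B"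
    and selfadjoint_A: "selfadjoint A" and selfadjoint_B: "selfadjoint B"
    and bij_A: "bij (shift_op A c)" and bij_B: "bij (shift_op B c)"
    and A_invariant: "A ` L \<subseteq> L" and B_invariant: "B ` L \<subseteq> L"
    and resolvent_A_invariant: "resolvent A c ` L \<subseteq> L"
    and resolvent_B_invariant: "resolvent B c ` L \<subseteq> L"
    and commute: "commute_on L A B"
begin

abbreviation grid :: "nat \<Rightarrow> nat \<Rightarrow> 'a \<Rightarrow> 'a" where
  "grid \<equiv> cayley_grid A B c"

lemma cayley_A_invariant: "cayley A c ` L \<subseteq> L"
  by (rule image_cayley_subset[OF subspace A_invariant resolvent_A_invariant])

lemma cayley_B_invariant: "cayley B c ` L \<subseteq> L"
  by (rule image_cayley_subset[OF subspace B_invariant resolvent_B_invariant])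

lemma commute_on_grid:
  assumes "commute_on L F (cayley A c)" "commute_on L F (cayley B c)"
  shows "commute_on L F (grid k l)"
  unfolding cayley_grid_def
  by (intro commute_on_compose commute_on_funpow assms cayley_A_invariant cayley_B_invariant
      image_funpow_subset)

lemma shift_op_A_grid: "z \<in> L \<Longrightarrow> shift_op A c (grid k l z) = grid k l (shift_op A c z)"
  using commute_on_grid[of "shift_op A c"]
    commute_on_shift_op_cayley[OF subspace clinear_A clinear_A bij_A A_invariant A_invariant
      resolvent_A_invariant commute_on_refl]
    commute_on_shift_op_cayley[OF subspace clinear_A clinear_B bij_B A_invariant B_invariant
      resolvent_B_invariant commute]
  unfolding commute_on_def by metis

lemma shift_op_B_grid: "z \<in> L \<Longrightarrow> shift_op B c (grid k l z) = grid k l (shift_op B c z)"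
  using commute_on_grid[of "shift_op B c"]
    commute_on_shift_op_cayley[OF subspace clinear_B clinear_A bij_A B_invariant A_invariant
      resolvent_A_invariant commute_on_sym[OF commute]]
    commute_on_shift_op_cayley[OF subspace clinear_B clinear_B bij_B B_invariant B_invariant
      resolvent_B_invariant commute_on_refl]
  unfolding commute_on_def by metis

lemma grid_Suc_right: "z \<in> L \<Longrightarrow> grid k (Suc l) z = cayley B c (grid k l z)"
proof -
  assume "z \<in> L"
  have "commute_on L (cayley B c) (cayley A c ^^ k)"
    using commute_on_cayley_cayley[OF subspace clinear_B clinear_A bij_B bij_A B_invariant
        A_invariant resolvent_B_invariant resolvent_A_invariant commute_on_sym[OF commute]]
    by (rule commute_on_funpow[OF _ cayley_A_invariant])
  moreover have "(cayley B c ^^ l) z \<in> L"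
    using image_funpow_subset[OF cayley_B_invariant] \<open>z \<in> L\<close> by blast
  ultimately show ?thesis by (simp add: cayley_grid_def commute_on_def)
qed

lemma cinner_grid: "cinner (grid k l u) (grid k l v) = cinner u v"
proof -
  have "cinner ((cayley B c ^^ l) u) ((cayley B c ^^ l) v) = cinner u v" for u v
    by (induction l) (simp_all add: cinner_cayley[OF selfadjoint_B bij_B])
  moreover have "cinner ((cayley A c ^^ k) u) ((cayley A c ^^ k) v) = cinner u v" for u v
    by (induction k) (simp_all add: cinner_cayley[OF selfadjoint_A bij_A])
  ultimately show ?thesis by (simp add: cayley_grid_def)
qed

lemma norm_grid: "norm (grid k l u) = norm u"
  using cinner_grid[of k l u u] by (simp add: norm_eq_sqrt_cinner)

end

lemma commuting_selfadjoint_pair_range: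
  assumes "clinear C" "clinear A" "clinear B" "selfadjoint A" "selfadjoint B"
    and "bij (shift_op A c)" "bij (shift_op B c)" "bij (shift_op A' c)" "bij (shift_op B' c)"
    and "\<And>z. A (C z) = C (A' z)" "\<And>z. B (C z) = C (B' z)" "commute_on (range C) A B"
  shows "commuting_selfadjoint_pair (range C) A B c"
  using assms csubspace_range[OF assms(1)]
    resolvent_intertwining[of C A A', OF assms(1,10,6,8)]
    resolvent_intertwining[of C B B', OF assms(1,11,7,9)]
  by unfold_locales (simp_all add: image_subset_iff)

section \<open>Averaging over a grid of unitaries\<close>

lemma le_of_nat_square_bound:
  fixes x B K :: real
  assumes "\<And>N::nat. N \<ge> 1 \<Longrightarrow> real N * real N * x \<le> real N * real N * B + real N * K"
  shows "x \<le> B"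
proof (rule ccontr)
  assume "\<not> x \<le> B"
  obtain n :: nat where n: "K / (x - B) < real n" using reals_Archimedean2 by blast
  define N where "N = Suc n"
  have "real N * (real N * x) \<le> real N * (real N * B + K)"
    using assms[of N] by (simp add: N_def algebra_simps)
  then have "real N * x \<le> real N * B + K"
    by (simp add: N_def mult_le_cancel_left_pos)
  then have "real N * (x - B) \<le> K"
    by (simp add: algebra_simps)
  moreover have "K / (x - B) < real N" using n by (simp add: N_def)
  then have "K < real N * (x - B)"
    using \<open>\<not> x \<le> B\<close> by (simp add: divide_less_eq mult.commute)
  ultimately show False by simp
qed

lemma double_sum_telescope:
  fixes g h \<Phi> :: "nat \<Rightarrow> nat \<Rightarrow> 'a::comm_ring_1"
  assumes "\<And>k l. \<Phi> k l = c0 + \<alpha> * (g (Suc k) l - g k l) + \<beta> * (h k (Suc l) - h k l)"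
  shows "(\<Sum>k<N. \<Sum>l<N. \<Phi> k l) = of_nat (N * N) * c0 + \<alpha> * (\<Sum>l<N. g N l - g 0 l)
           + \<beta> * (\<Sum>k<N. h k N - h k 0)"
proof -
  have "(\<Sum>k<N. \<Sum>l<N. g (Suc k) l - g k l) = (\<Sum>l<N. \<Sum>k<N. g (Suc k) l - g k l)"
    by (rule sum.swap)
  also have "\<dots> = (\<Sum>l<N. g N l - g 0 l)"
    by (simp add: sum_lessThan_telescope[of "\<lambda>k. g k _"])
  finally have "(\<Sum>k<N. \<Sum>l<N. g (Suc k) l - g k l) = (\<Sum>l<N. g N l - g 0 l)" .
  moreover have "(\<Sum>k<N. \<Sum>l<N. h k (Suc l) - h k l) = (\<Sum>k<N. h k N - h k 0)"
    by (simp add: sum_lessThan_telescope)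
  ultimately show ?thesis
    by (simp add: assms sum.distrib sum_distrib_left[symmetric])
qed

text \<open>Averaging the identity over \<open>0 \<le> k, l < N\<close>: the telescoping sums grow only like \<open>N\<close>,
  against \<open>N\<^sup>2\<close> copies of \<open>c0\<close>.\<close>
lemma norm_le_of_telescoping:
  fixes g h \<Phi> :: "nat \<Rightarrow> nat \<Rightarrow> complex"
  assumes eq: "\<And>k l. \<Phi> k l = c0 + \<alpha> * (g (Suc k) l - g k l) + \<beta> * (h k (Suc l) - h k l)"
    and bounds: "\<And>k l. cmod (\<Phi> k l) \<le> B" "\<And>k l. cmod (g k l) \<le> G" "\<And>k l. cmod (h k l) \<le> H"
  shows "cmod c0 \<le> B"
proof (rule le_of_nat_square_bound[where K = "2 * cmod \<alpha> * G + 2 * cmod \<beta> * H"])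
  fix N :: nat
  define s\<Phi> where "s\<Phi> = (\<Sum>k<N. \<Sum>l<N. \<Phi> k l)"
  define sg where "sg = (\<Sum>l<N. g N l - g 0 l)"
  define sh where "sh = (\<Sum>k<N. h k N - h k 0)"
  have diff: "cmod (a - b) \<le> 2 * M" if "cmod a \<le> M" "cmod b \<le> M" for a b :: complex and M
    using norm_triangle_ineq4[of a b] that by simp
  have "cmod s\<Phi> \<le> real N * real N * B"
    using sum_norm_le[of "{..<N}" "\<lambda>k. \<Sum>l<N. \<Phi> k l" "\<lambda>_. real N * B"]
      sum_norm_le[of "{..<N}" "\<Phi> _" "\<lambda>_. B"] bounds(1) by (simp add: s\<Phi>_def)
  moreover have "cmod sg \<le> real N * (2 * G)"
    using sum_norm_le[of "{..<N}" "\<lambda>l. g N l - g 0 l" "\<lambda>_. 2 * G"]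
      diff[OF bounds(2) bounds(2)] by (simp add: sg_def)
  moreover have "cmod sh \<le> real N * (2 * H)"
    using sum_norm_le[of "{..<N}" "\<lambda>k. h k N - h k 0" "\<lambda>_. 2 * H"]
      diff[OF bounds(3) bounds(3)] by (simp add: sh_def)
  ultimately have "cmod s\<Phi> + cmod \<alpha> * cmod sg + cmod \<beta> * cmod sh
      \<le> real N * real N * B + cmod \<alpha> * (real N * (2 * G)) + cmod \<beta> * (real N * (2 * H))"
    by (intro add_mono mult_left_mono) auto
  moreover have "real N * real N * cmod c0 = cmod (s\<Phi> - \<alpha> * sg - \<beta> * sh)"
    using double_sum_telescope[of \<Phi> c0 \<alpha> g \<beta> h N, OF eq]
    by (simp add: s\<Phi>_def sg_def sh_def norm_mult algebra_simps)
  moreover have "cmod (s\<Phi> - \<alpha> * sg - \<beta> * sh) \<le> cmod s\<Phi> + cmod \<alpha> * cmod sg + cmod \<beta> * cmod sh"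
    using norm_triangle_ineq4[of "s\<Phi> - \<alpha> * sg" "\<beta> * sh"] norm_triangle_ineq4[of s\<Phi> "\<alpha> * sg"]
    by (simp add: norm_mult)
  ultimately show "real N * real N * cmod c0
      \<le> real N * real N * B + real N * (2 * cmod \<alpha> * G + 2 * cmod \<beta> * H)"
    by (simp add: algebra_simps)
qed

locale intertwined_pairs =
  S: commuting_selfadjoint_pair N A1 B1 c + T: commuting_selfadjoint_pair M A2 B2 c
  for N M :: "'a::complex_hilbert set" and A1 B1 A2 B2 c +
  fixes C :: "'a \<Rightarrow> 'a"
  assumes clinear_C: "clinear C"
    and A_intertwining: "\<And>z. A1 (C z) = C (A2 z)"
    and B_intertwining: "\<And>z. B1 (C z) = C (B2 z)"
    and nonreal: "c \<noteq> cnj c"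
begin

lemma C_grid: "C (T.grid k l z) = S.grid k l (C z)"
  by (rule cayley_grid_intertwining[OF clinear_C A_intertwining B_intertwining
        S.bij_A T.bij_A S.bij_B T.bij_B])

text \<open>Writing \<open>S = A1 + \<i> B1\<close>, \<open>T = A2 + \<i> B2\<close>, the value of \<open>\<langle>(S Y - Y T + C) p, q\<rangle>\<close> at
  \<open>p = P\<^sub>k\<^sub>l m\<close>, \<open>q = Q\<^sub>k\<^sub>l n\<close> is \<open>\<langle>C m, n\<rangle>\<close> plus discrete derivatives in \<open>k\<close> and \<open>l\<close>.\<close>
lemma derivation_grid_telescoping:
  assumes Y: "clinear Y" and "m \<in> M" "n \<in> N"
  defines "g \<equiv> \<lambda>i j. cinner (Y (T.grid i j (shift_op A2 c m))) (S.grid i j (shift_op A1 c n))"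
    and "h \<equiv> \<lambda>i j. cinner (Y (T.grid i j (shift_op B2 c m))) (S.grid i j (shift_op B1 c n))"
  shows "cinner (A1 (Y (T.grid k l m)) + \<i> *\<^sub>C B1 (Y (T.grid k l m))
        - Y (A2 (T.grid k l m) + \<i> *\<^sub>C B2 (T.grid k l m)) + C (T.grid k l m)) (S.grid k l n)
    = cinner (C m) n + (1 / (c - cnj c)) * (g (Suc k) l - g k l)
        + (\<i> / (c - cnj c)) * (h k (Suc l) - h k l)"
proof -
  define p where "p = T.grid k l m"
  define q where "q = S.grid k l n"
  have "shift_op B2 c m \<in> M" "shift_op B1 c n \<in> N"
    using image_shift_op_subset[OF T.subspace T.B_invariant]
      image_shift_op_subset[OF S.subspace S.B_invariant] \<open>m \<in> M\<close> \<open>n \<in> N\<close> by blast+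
  then have "g (Suc k) l - g k l = (c - cnj c) * (cinner (Y p) (A1 q) - cinner (Y (A2 p)) q)"
      "h k (Suc l) - h k l = (c - cnj c) * (cinner (Y p) (B1 q) - cinner (Y (B2 p)) q)"
    using cinner_cayley_difference[OF Y S.bij_A T.bij_A, of p q]
      cinner_cayley_difference[OF Y S.bij_B T.bij_B, of p q] \<open>m \<in> M\<close> \<open>n \<in> N\<close>
    by (simp_all add: g_def h_def p_def q_def cayley_grid_Suc_left T.grid_Suc_right
        S.grid_Suc_right T.shift_op_A_grid S.shift_op_A_grid T.shift_op_B_grid S.shift_op_B_grid)
  then have "(1 / (c - cnj c)) * (g (Suc k) l - g k l) = cinner (Y p) (A1 q) - cinner (Y (A2 p)) q"
      "(\<i> / (c - cnj c)) * (h k (Suc l) - h k l)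
        = \<i> * (cinner (Y p) (B1 q) - cinner (Y (B2 p)) q)"
    using nonreal by simp_all
  moreover have "cinner (C p) q = cinner (C m) n"
    by (simp add: p_def q_def C_grid S.cinner_grid)
  moreover have "cinner (A1 (Y p)) q = cinner (Y p) (A1 q)" "cinner (B1 (Y p)) q = cinner (Y p) (B1 q)"
    using S.selfadjoint_A S.selfadjoint_B by (simp_all add: selfadjoint_def)
  ultimately show ?thesis
    using nonreal
    by (simp add: p_def[symmetric] q_def[symmetric] clinear_add[OF Y] clinear_scaleC[OF Y]
        cinner_add_left cinner_diff_left cinner_scaleC_left algebra_simps)
qed

lemma norm_cinner_le:
  assumes Y: "bounded_clinear Y"
    and D: "\<And>z. norm (A1 (Y z) + \<i> *\<^sub>C B1 (Y z) - Y (A2 z + \<i> *\<^sub>C B2 z) + C z) \<le> d * norm z"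
    and "m \<in> M" "n \<in> N"
  shows "cmod (cinner (C m) n) \<le> d * norm m * norm n"
proof -
  obtain K where K: "K \<ge> 0" "\<And>x. norm (Y x) \<le> norm x * K"
    using bounded_clinear_bound[OF Y] by blast
  have grid_bound: "cmod (cinner (Y (T.grid k l u)) (S.grid k l v)) \<le> norm u * K * norm v"
    for k l u v
    using norm_cinner_le[of "Y (T.grid k l u)" "S.grid k l v"]
      mult_right_mono[OF K(2)[of "T.grid k l u"], of "norm v"]
    by (simp add: T.norm_grid S.norm_grid)
  define D where "D = (\<lambda>z. A1 (Y z) + \<i> *\<^sub>C B1 (Y z) - Y (A2 z + \<i> *\<^sub>C B2 z) + C z)"
  define g where "g = (\<lambda>i j. cinner (Y (T.grid i j (shift_op A2 c m))) (S.grid i j (shift_op A1 c n)))"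
  define h where "h = (\<lambda>i j. cinner (Y (T.grid i j (shift_op B2 c m))) (S.grid i j (shift_op B1 c n)))"
  show ?thesis
  proof (rule norm_le_of_telescoping[where \<Phi> = "\<lambda>k l. cinner (D (T.grid k l m)) (S.grid k l n)"
        and g = g and h = h])
    show "cinner (D (T.grid k l m)) (S.grid k l n) = cinner (C m) n
      + (1 / (c - cnj c)) * (g (Suc k) l - g k l) + (\<i> / (c - cnj c)) * (h k (Suc l) - h k l)"
      for k l
      unfolding D_def g_def h_def
      by (rule derivation_grid_telescoping[OF bounded_clinear_imp_clinear[OF Y] \<open>m \<in> M\<close> \<open>n \<in> N\<close>])
    show "cmod (cinner (D (T.grid k l m)) (S.grid k l n)) \<le> d * norm m * norm n" for k l
      using norm_cinner_le[of "D (T.grid k l m)" "S.grid k l n"]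
        mult_right_mono[OF D[of "T.grid k l m"], of "norm (S.grid k l n)"]
      by (simp add: D_def T.norm_grid S.norm_grid)
  qed (unfold g_def h_def, (rule grid_bound)+)
qed

end

section \<open>Cartesian decomposition and the Fuglede--Putnam property\<close>

definition re_part :: "('a::complex_hilbert \<Rightarrow> 'a) \<Rightarrow> 'a \<Rightarrow> 'a" where
  "re_part S = (\<lambda>z. (1/2) *\<^sub>C S z + (1/2) *\<^sub>C adj S z)"

definition im_part :: "('a::complex_hilbert \<Rightarrow> 'a) \<Rightarrow> 'a \<Rightarrow> 'a" where
  "im_part S = (\<lambda>z. (- \<i>/2) *\<^sub>C S z + (\<i>/2) *\<^sub>C adj S z)"

lemma bounded_clinear_re_part: "bounded_clinear S \<Longrightarrow> bounded_clinear (re_part S)"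
  unfolding re_part_def by (intro bounded_clinear_lincomb bounded_clinear_adj)

lemma bounded_clinear_im_part: "bounded_clinear S \<Longrightarrow> bounded_clinear (im_part S)"
  unfolding im_part_def by (intro bounded_clinear_lincomb bounded_clinear_adj)

lemma selfadjoint_re_part: "bounded_clinear S \<Longrightarrow> selfadjoint (re_part S)"
  unfolding selfadjoint_def re_part_def
  by (simp add: cinner_add_left cinner_add_right cinner_scaleC_left cinner_scaleC_right
      cinner_adj_left cinner_adj_right)

lemma selfadjoint_im_part: "bounded_clinear S \<Longrightarrow> selfadjoint (im_part S)"
  unfolding selfadjoint_def im_part_def
  by (simp add: cinner_add_left cinner_add_right cinner_scaleC_left cinner_scaleC_right
      cinner_adj_left cinner_adj_right algebra_simps)

lemma re_part_add_im_part: "re_part S z + \<i> *\<^sub>C im_part S z = S z"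
proof -
  have "re_part S z + \<i> *\<^sub>C im_part S z
      = (1/2 + \<i> * (- \<i>/2)) *\<^sub>C S z + (1/2 + \<i> * (\<i>/2)) *\<^sub>C adj S z"
    by (simp only: re_part_def im_part_def scaleC_add_right scaleC_add_left scaleC_scaleC add_ac)
  also have "\<dots> = S z" by simp
  finally show ?thesis .
qed

lemma re_part_intertwining:
  assumes "clinear C" "\<And>z. S (C z) = C (T z)" "\<And>z. adj S (C z) = C (adj T z)"
  shows "re_part S (C z) = C (re_part T z)"
  by (simp add: re_part_def assms clinear_add[OF assms(1)] clinear_scaleC[OF assms(1)])

lemma im_part_intertwining:
  assumes "clinear C" "\<And>z. S (C z) = C (T z)" "\<And>z. adj S (C z) = C (adj T z)"
  shows "im_part S (C z) = C (im_part T z)"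
  by (simp add: im_part_def assms clinear_add[OF assms(1)] clinear_scaleC[OF assms(1)])

lemma commute_on_lincomb:
  assumes "commute_on L F1 H" "commute_on L F2 H" "clinear H"
  shows "commute_on L (\<lambda>z. a *\<^sub>C F1 z + b *\<^sub>C F2 z) H"
  using assms by (simp add: commute_on_def clinear_add clinear_scaleC)

lemma commute_on_re_part_im_part:
  assumes "bounded_clinear S" "commute_on L S (adj S)"
  shows "commute_on L (re_part S) (im_part S)"
proof -
  have lin: "clinear S" "clinear (adj S)" "clinear (im_part S)"
    using assms(1) bounded_clinear_adj bounded_clinear_im_part bounded_clinear_imp_clinear
    by blast+
  have "commute_on L (im_part S) S" "commute_on L (im_part S) (adj S)"
    unfolding im_part_def using assms(2) commute_on_sym commute_on_refl lin(1,2)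
    by (blast intro: commute_on_lincomb)+
  then show ?thesis
    unfolding re_part_def using lin(3)
    by (blast intro: commute_on_lincomb commute_on_sym)
qed

lemma adj_intertwining:
  assumes "bounded_clinear S" "bounded_clinear T" "bounded_clinear C" "S \<circ> C = C \<circ> T"
  shows "adj T \<circ> adj C = adj C \<circ> adj S"
  using arg_cong[OF assms(4), of adj] by (simp add: adj_compose assms(1-3))

text \<open>Applying (FP) to \<open>C\<close> and to \<open>C T\<close> shows that \<open>C\<close> kills \<open>T T\<^sup>* - T\<^sup>* T\<close>;
  hence \<open>S\<close> is normal on the range of \<open>C\<close> and \<open>T\<close> on the range of \<open>C\<^sup>*\<close>.\<close>
lemma FP_BH_consequences:
  assumes S: "bounded_clinear S" and T: "bounded_clinear T" and C: "bounded_clinear C"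
    and "FP_BH S T" and SC: "S \<circ> C = C \<circ> T"
  shows "adj S \<circ> C = C \<circ> adj T"
    and "commute_on (range C) S (adj S)"
    and "commute_on (range (adj C)) T (adj T)"
proof -
  have FP: "adj S \<circ> K = K \<circ> adj T" if "bounded_clinear K" "S \<circ> K = K \<circ> T" for K
    using assms(4) that by (simp add: FP_BH_def)
  show adjSC: "adj S \<circ> C = C \<circ> adj T" by (rule FP[OF C SC])
  have "S \<circ> (C \<circ> T) = (C \<circ> T) \<circ> T" by (simp add: o_assoc SC)
  then have "adj S \<circ> (C \<circ> T) = (C \<circ> T) \<circ> adj T"
    by (rule FP[OF bounded_clinear_compose[OF C T]])
  then have normal: "C \<circ> (T \<circ> adj T) = C \<circ> (adj T \<circ> T)"
    using adjSC by (simp add: o_assoc)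
  then show "commute_on (range C) S (adj S)"
    using SC adjSC by (auto simp: commute_on_def fun_eq_iff)
  have "adj (C \<circ> (T \<circ> adj T)) = adj (C \<circ> (adj T \<circ> T))" by (simp only: normal)
  then have "(T \<circ> adj T) \<circ> adj C = (adj T \<circ> T) \<circ> adj C"
    by (simp add: adj_compose bounded_clinear_compose bounded_clinear_adj adj_adj C T)
  then show "commute_on (range (adj C)) T (adj T)"
    by (auto simp: commute_on_def fun_eq_iff)
qed

lemma exists_nonreal_common_resolvent_point:
  fixes \<F> :: "('a::complex_hilbert \<Rightarrow> 'a) set"
  assumes "finite \<F>" "\<And>F. F \<in> \<F> \<Longrightarrow> bounded_clinear F"
  obtains c where "c \<noteq> cnj c" "\<And>F. F \<in> \<F> \<Longrightarrow> bij (shift_op F c)"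
proof -
  have "\<forall>F\<in>\<F>. \<exists>K. 0 \<le> K \<and> (\<forall>x. norm (F x) \<le> norm x * K)"
    using assms(2) bounded_clinear_bound by metis
  then obtain K where K: "\<And>F. F \<in> \<F> \<Longrightarrow> 0 \<le> K F" "\<And>F x. F \<in> \<F> \<Longrightarrow> norm (F x) \<le> norm x * K F"
    by metis
  define c where "c = \<i> * complex_of_real (1 + sum K \<F>)"
  have "0 \<le> sum K \<F>" using K(1) by (rule sum_nonneg)
  then have "cmod c = 1 + sum K \<F>"
    unfolding c_def norm_mult norm_ii norm_of_real by simp
  have "c \<noteq> cnj c" using \<open>0 \<le> sum K \<F>\<close> by (simp add: c_def complex_eq_iff)
  moreover have "bij (shift_op F c)" if "F \<in> \<F>" for F
  proof (rule bij_shift_op)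
    show "clinear F" using assms(2)[OF that] by (rule bounded_clinear_imp_clinear)
    have "K F \<le> sum K \<F>" using that K(1) assms(1) by (intro member_le_sum) auto
    then show "K F < cmod c" using \<open>cmod c = 1 + sum K \<F>\<close> by simp
  qed (use K that in auto)
  ultimately show ?thesis using that by blast
qed

lemma commuting_selfadjoint_pair_cartesian:
  assumes S: "bounded_clinear S" and T: "bounded_clinear T" and "clinear C"
    and "\<And>z. S (C z) = C (T z)" "\<And>z. adj S (C z) = C (adj T z)"
    and "commute_on (range C) S (adj S)"
    and "bij (shift_op (re_part S) c)" "bij (shift_op (im_part S) c)"
      "bij (shift_op (re_part T) c)" "bij (shift_op (im_part T) c)"
  shows "commuting_selfadjoint_pair (range C) (re_part S) (im_part S) c"
  by (rule commuting_selfadjoint_pair_range[OF assms(3)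
        bounded_clinear_imp_clinear[OF bounded_clinear_re_part[OF S]]
        bounded_clinear_imp_clinear[OF bounded_clinear_im_part[OF S]]
        selfadjoint_re_part[OF S] selfadjoint_im_part[OF S] assms(7-10)
        re_part_intertwining[OF assms(3-5)] im_part_intertwining[OF assms(3-5)]
        commute_on_re_part_im_part[OF S assms(6)]])

lemma norm_cinner_le_on_ranges:
  fixes S T Y C :: "'a::complex_hilbert \<Rightarrow> 'a"
  assumes S: "bounded_clinear S" and T: "bounded_clinear T" and Y: "bounded_clinear Y"
    and C: "bounded_clinear C"
    and SC: "S \<circ> C = C \<circ> T" and adj_SC: "adj S \<circ> C = C \<circ> adj T"
    and normal: "commute_on (range C) S (adj S)" "commute_on (range (adj C)) T (adj T)"
    and D: "\<And>z. norm (S (Y z) - Y (T z) + C z) \<le> d * norm z"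
    and "m \<in> range (adj C)" "n \<in> range C"
  shows "cmod (cinner (C m) n) \<le> d * norm m * norm n"
proof -
  obtain c where "c \<noteq> cnj c"
    and bij: "\<And>F. F \<in> {re_part S, im_part S, re_part T, im_part T} \<Longrightarrow> bij (shift_op F c)"
    using exists_nonreal_common_resolvent_point[of "{re_part S, im_part S, re_part T, im_part T}"]
      S T bounded_clinear_re_part bounded_clinear_im_part by blast
  have "T \<circ> adj C = adj C \<circ> S" "adj T \<circ> adj C = adj C \<circ> adj S"
    using adj_intertwining[OF S T C SC]
      adj_intertwining[OF bounded_clinear_adj[OF S] bounded_clinear_adj[OF T] C adj_SC]
    by (simp_all add: adj_adj S T)
  then have adj_C: "\<And>z. T (adj C z) = adj C (S z)" "\<And>z. adj T (adj C z) = adj C (adj S z)"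
    by (metis comp_apply)+
  have C': "\<And>z. S (C z) = C (T z)" "\<And>z. adj S (C z) = C (adj T z)"
    using SC adj_SC by (metis comp_apply)+
  have lin: "clinear C" "clinear (adj C)"
    using C bounded_clinear_adj bounded_clinear_imp_clinear by blast+
  have "intertwined_pairs (range C) (range (adj C))
      (re_part S) (im_part S) (re_part T) (im_part T) c C"
    using commuting_selfadjoint_pair_cartesian[OF S T lin(1) C' normal(1)]
      commuting_selfadjoint_pair_cartesian[OF T S lin(2) adj_C normal(2)]
      re_part_intertwining[OF lin(1) C'] im_part_intertwining[OF lin(1) C'] lin(1) bij
      \<open>c \<noteq> cnj c\<close>
    by (intro intertwined_pairs.intro intertwined_pairs_axioms.intro) simp_all
  then show ?thesis
    by (rule intertwined_pairs.norm_cinner_le[OF _ Y _ \<open>m \<in> range (adj C)\<close> \<open>n \<in> range C\<close>])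
      (simp add: re_part_add_im_part D)
qed

text \<open>Test the bound with \<open>m = C\<^sup>* C y\<close> and \<open>n = C y\<close>.\<close>
lemma norm_le_of_cinner_le_on_ranges:
  assumes C: "bounded_clinear C" and "0 \<le> d"
    and bound: "\<And>m n. m \<in> range (adj C) \<Longrightarrow> n \<in> range C
      \<Longrightarrow> cmod (cinner (C m) n) \<le> d * norm m * norm n"
  shows "norm (C y) \<le> d * norm y"
proof -
  define u where "u = adj C (C y)"
  have "norm u * norm u \<le> norm u * (d * norm (C y))"
    using bound[of u "C y"]
    by (simp add: u_def cinner_adj_right[OF C] cinner_self_eq_norm_power2 power2_eq_square
        norm_mult algebra_simps)
  then have u: "norm u \<le> d * norm (C y)"
    using \<open>0 \<le> d\<close> by (cases "u = 0") auto
  have "norm (C y) * norm (C y) = Re (cinner (C y) (C y))"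
    by (simp add: power2_norm_eq_Re_cinner[symmetric] power2_eq_square)
  also have "\<dots> = Re (cinner y u)" by (simp add: u_def cinner_adj_right[OF C])
  also have "\<dots> \<le> norm y * norm u" by (rule Re_cinner_le_norm_mult)
  also have "\<dots> \<le> norm (C y) * (d * norm y)"
    using mult_left_mono[OF u norm_ge_zero[of y]] by (simp add: algebra_simps)
  finally show ?thesis
    using \<open>0 \<le> d\<close> by (cases "C y = 0") auto
qed

theorem mainTheorem12:
  fixes S T X C :: "'a::complex_hilbert \<Rightarrow> 'a"
  assumes "separable_H TYPE('a)"
    and "bounded_clinear S" and "bounded_clinear T" and "bounded_clinear X"
    and "bounded_clinear C"
    and "FP_BH S T"
    and "gen_deriv S T C = (\<lambda>x. 0)"
  shows "onorm (\<lambda>x. gen_deriv S T X x + C x) \<ge> onorm C"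
proof -
  have SC: "S \<circ> C = C \<circ> T"
    using assms(7) by (simp add: fun_eq_iff gen_deriv_def)
  note FP = FP_BH_consequences[OF assms(2,3,5,6) SC]
  define D where "D = (\<lambda>x. gen_deriv S T X x + C x)"
  have "bounded_linear D"
    unfolding D_def gen_deriv_def using assms(2-5)[THEN bounded_clinear_imp_bounded_linear]
    by (intro bounded_linear_add bounded_linear_sub bounded_linear_compose[of S X]
        bounded_linear_compose[of X T])
  then have "norm (S (X z) - X (T z) + C z) \<le> onorm D * norm z" for z
    using onorm[of D z] by (simp add: D_def gen_deriv_def mult.commute)
  then have "norm (C y) \<le> onorm D * norm y" for y
    by (intro norm_le_of_cinner_le_on_ranges[OF assms(5) onorm_pos_le[OF \<open>bounded_linear D\<close>]]
        norm_cinner_le_on_ranges[OF assms(2,3,4,5) SC FP])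
  then show ?thesis
    unfolding D_def[symmetric] by (intro onorm_bound onorm_pos_le \<open>bounded_linear D\<close>)
qed

end
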